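(* For every $n\ge1$ there is an injective map from $\bar{Q}_1(0,n)$ to $\bar{P}_1(0,n)$.
   Context: Partitions: $\lambda_1\ge\cdots\ge\lambda_\ell>0$, $\ell(\lambda)=\ell$, $\lambda_i=0$ for $i>\ell$, $s(\lambda)$ the smallest part with $s(\emptyset)=+\infty$. Rank $=\lambda_1-\ell$. Durfee symbol $(\alpha,\beta)_j$ of $\lambda$: $j$ is the largest integer with $\lambda_j\ge j$ (side of the Durfee square), $\alpha$ is the conjugate of $(\lambda_1-j,\dots,\lambda_j-j)$ (columns right of the square), $\beta=(\lambda_{j+1},\lambda_{j+2},\dots)$ (rows below); $|\lambda|=|\alpha|+|\beta|+j^2$. $\bar{Q}_1(0,n)$ is the set of partitions of $n$ whose Durfee symbol $(\alpha,\beta)_j$ satisfies $j\ge1$, $\beta_1=j$, $\ell(\beta)-\ell(\alpha)\ge1$, $\alpha_1=\alpha_2=j>\alpha_3$ and $s(\beta)\ge3$. $\bar{P}_1(0,n)$ is the set of partitions of $n$ with rank $\ge0$ whose Durfee symbol $(\gamma,\delta)_{j'}$ satisfies $j'\ge1$, $\ell(\gamma)=\ell(\delta)$, $\gamma_1\le j'-3$, $\delta_1=j'$ and $s(\delta)\ge2$. *)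

theory Defs
  imports Main "HOL-Library.Extended_Nat"
begin

definition is_partition :: "nat list \<Rightarrow> bool" where
  "is_partition p \<longleftrightarrow> sorted_wrt (\<ge>) p \<and> (\<forall>x\<in>set p. 0 < x)"

definition partitions_of :: "nat \<Rightarrow> nat list set" where
  "partitions_of n = {p. is_partition p \<and> sum_list p = n}"

text \<open>1-indexed part: part p i = lambda_i, with lambda_i = 0 for i > l(lambda) (and i = 0).\<close>
definition part :: "nat list \<Rightarrow> nat \<Rightarrow> nat" where
  "part p i = (if 1 \<le> i \<and> i \<le> length p then p ! (i - 1) else 0)"

definition smallest :: "nat list \<Rightarrow> enat" where
  "smallest p = (if p = [] then \<infinity> else enat (Min (set p)))"

definition rank :: "nat list \<Rightarrow> int" where
  "rank p = int (part p 1) - int (length p)"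

definition durfee :: "nat list \<Rightarrow> nat" where
  "durfee p = (GREATEST j. j \<le> length p \<and> (j = 0 \<or> j \<le> part p j))"

definition conjugate :: "nat list \<Rightarrow> nat list" where
  "conjugate mu = map (\<lambda>i. card {k \<in> {1..length mu}. i \<le> part mu k}) [1..<part mu 1 + 1]"

definition dalpha :: "nat list \<Rightarrow> nat list" where
  "dalpha p = conjugate (filter (\<lambda>x. 0 < x) (map (\<lambda>x. x - durfee p) (take (durfee p) p)))"

definition dbeta :: "nat list \<Rightarrow> nat list" where
  "dbeta p = drop (durfee p) p"

definition Q1bar :: "nat \<Rightarrow> nat list set" where
  "Q1bar n = {p \<in> partitions_of n.
     (let j = durfee p; \<alpha> = dalpha p; \<beta> = dbeta p in
       j \<ge> 1 \<and> part \<beta> 1 = j \<and> int (length \<beta>) - int (length \<alpha>) \<ge> 1 \<and>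
       part \<alpha> 1 = j \<and> part \<alpha> 2 = j \<and> j > part \<alpha> 3 \<and> smallest \<beta> \<ge> 3)}"

definition P1bar :: "nat \<Rightarrow> nat list set" where
  "P1bar n = {p \<in> partitions_of n. rank p \<ge> 0 \<and>
     (let j' = durfee p; \<gamma> = dalpha p; \<delta> = dbeta p in
       j' \<ge> 1 \<and> length \<gamma> = length \<delta> \<and> int (part \<gamma> 1) \<le> int j' - 3 \<and>
       part \<delta> 1 = j' \<and> smallest \<delta> \<ge> 2)}"

end

theory Submission
  imports Defs "HOL-Library.Multiset"
begin

(* A partition is described equally well by its column lengths
   parts_ge p k = #{i. p_i >= k} (the parts of the conjugate partition), and
   the constraints on a Durfee symbol translate into statements about these
   counts: for i >= 1 the i-th part of alpha is parts_ge (take j p) (j + i).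
   From this we show that every p in Q1bar(n), with Durfee side j, satisfies
   p_j = j + 2, p_{j+1} = j, has all parts >= 3 and p_1 < l(p) (the locale
   Q1_shape). For such p, with L = l(p) and columns c_k = parts_ge p k, the
   map phi builds the partition with rows
     L,  c_4, ..., c_j,  j+1, j+1, j+1, j+1,  c_{j+3} + 2, ..., c_L + 2.
   It has the same size (as c_1 = c_2 = c_3 = L and c_{j+1} = c_{j+2} = j),
   Durfee side j + 1, rank 0 and the Durfee symbol required by P1bar.
   The image determines j and L, and then every column count of p; since a
   partition is determined by its column counts, phi is injective. *)

hide_const (open) Multiset.part
hide_fact (open) Multiset.part_def

(* The number of parts that are at least k, i.e. the k-th column of the
   Ferrers diagram (the k-th part of the conjugate partition). *)
definition parts_ge :: "nat list \<Rightarrow> nat \<Rightarrow> nat" where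
  "parts_ge xs k = length (filter (\<lambda>x. k \<le> x) xs)"

lemma sorted_desc_nth_le:
  fixes xs :: "nat list"
  assumes "sorted_wrt (\<ge>) xs" "i \<le> k" "k < length xs"
  shows "xs ! k \<le> xs ! i"
proof (cases "i = k")
  case False
  with assms have "i < k" by simp
  from sorted_wrt_nth_less[OF assms(1) this assms(3)] show ?thesis by simp
qed simp

lemma last_le_parts:
  fixes xs :: "nat list"
  assumes "sorted_wrt (\<ge>) xs" "x \<in> set xs"
  shows "last xs \<le> x"
proof -
  obtain m where "m < length xs" "x = xs ! m" using assms(2) by (auto simp: in_set_conv_nth)
  moreover have "last xs = xs ! (length xs - 1)" using assms(2) by (intro last_conv_nth) auto
  ultimately show ?thesis using sorted_desc_nth_le[OF assms(1), of m "length xs - 1"] by simp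
qed

lemma parts_ge_lower:
  assumes s: "sorted_wrt (\<ge>) xs" and i: "i < length xs" and k: "k \<le> xs ! i"
  shows "i + 1 \<le> parts_ge xs k"
proof -
  have "{0..i} \<subseteq> {m. m < length xs \<and> k \<le> xs ! m}"
    using i by (auto intro: order_trans[OF k sorted_desc_nth_le[OF s _ i]])
  from card_mono[OF _ this] show ?thesis
    by (simp add: parts_ge_def length_filter_conv_card)
qed

lemma parts_ge_upper:
  assumes s: "sorted_wrt (\<ge>) xs" and i: "i < length xs" and k: "xs ! i < k"
  shows "parts_ge xs k \<le> i"
proof -
  have "{m. m < length xs \<and> k \<le> xs ! m} \<subseteq> {0..<i}"
  proof
    fix m assume m: "m \<in> {m. m < length xs \<and> k \<le> xs ! m}"
    show "m \<in> {0..<i}"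
    proof (rule ccontr)
      assume "m \<notin> {0..<i}"
      hence "xs ! m \<le> xs ! i" using m sorted_desc_nth_le[OF s] by simp
      with m k show False by simp
    qed
  qed
  from card_mono[OF _ this] show ?thesis
    by (simp add: parts_ge_def length_filter_conv_card)
qed

lemma parts_ge_antimono: "k \<le> k' \<Longrightarrow> parts_ge xs k' \<le> parts_ge xs k"
  unfolding parts_ge_def by (induction xs) auto

lemma parts_ge_le_length: "parts_ge xs k \<le> length xs"
  unfolding parts_ge_def by simp

lemma parts_ge_all: "\<forall>x\<in>set xs. k \<le> x \<Longrightarrow> parts_ge xs k = length xs"
  unfolding parts_ge_def by (simp add: filter_id_conv)

lemma parts_ge_none: "\<forall>x\<in>set xs. x < k \<Longrightarrow> parts_ge xs k = 0"
  unfolding parts_ge_def by (auto simp add: filter_empty_conv)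

lemma parts_ge_Suc: "parts_ge xs k = count (mset xs) k + parts_ge xs (Suc k)"
  unfolding parts_ge_def by (induction xs) auto

lemma sum_list_parts_ge:
  "\<forall>x\<in>set xs. x \<le> M \<Longrightarrow> sum_list xs = (\<Sum>k\<in>{1..M}. parts_ge xs k)"
proof (induction xs)
  case (Cons x xs)
  have "(\<Sum>k\<in>{1..M}. parts_ge (x # xs) k) = (\<Sum>k\<in>{1..M}. (if k \<le> x then 1 else 0) + parts_ge xs k)"
    by (rule sum.cong) (auto simp: parts_ge_def)
  also have "\<dots> = card {k\<in>{1..M}. k \<le> x} + (\<Sum>k\<in>{1..M}. parts_ge xs k)"
    by (simp add: sum.distrib sum.If_cases Int_def)
  also have "{k\<in>{1..M}. k \<le> x} = {1..x}" using Cons.prems by auto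
  finally show ?case using Cons by simp
qed (simp add: parts_ge_def)

lemma partition_eq_by_parts_ge:
  assumes "is_partition xs" "is_partition ys" "\<And>k. parts_ge xs k = parts_ge ys k"
  shows "xs = ys"
proof -
  have "count (mset xs) k = count (mset ys) k" for k
    using parts_ge_Suc[of xs k] parts_ge_Suc[of ys k] assms(3)[of k] assms(3)[of "Suc k"] by simp
  hence "mset (rev xs) = mset (rev ys)" by (simp add: multiset_eq_iff)
  moreover have "sorted (rev xs)" "sorted (rev ys)" using assms(1,2)
    by (auto simp: is_partition_def sorted_wrt_rev)
  ultimately have "rev xs = rev ys" by (metis properties_for_sort sorted_sort_id)
  thus ?thesis by simp
qed

lemma part_conjugate:
  assumes "is_partition mu" "1 \<le> i"
  shows "part (conjugate mu) i = parts_ge mu i"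
proof -
  have col: "card {k \<in> {1..length mu}. i \<le> part mu k} = parts_ge mu i"
  proof -
    have "{k \<in> {1..length mu}. i \<le> part mu k} = Suc ` {m. m < length mu \<and> i \<le> mu ! m}"
    proof (intro equalityI subsetI)
      fix k assume "k \<in> {k \<in> {1..length mu}. i \<le> part mu k}"
      thus "k \<in> Suc ` {m. m < length mu \<and> i \<le> mu ! m}"
        by (auto simp: part_def image_iff split: if_splits intro!: exI[of _ "k - 1"])
    qed (auto simp: part_def)
    thus ?thesis by (simp add: card_image parts_ge_def length_filter_conv_card)
  qed
  show ?thesis
  proof (cases "i \<le> part mu 1")
    case True
    have "part (conjugate mu) i = conjugate mu ! (i - 1)"
      using True assms(2) by (simp add: part_def conjugate_def)
    also have "\<dots> = card {k \<in> {1..length mu}. i \<le> part mu k}"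
    proof -
      have "[1..<part mu 1 + 1] ! (i - 1) = i" using True assms(2) by (subst nth_upt) auto
      thus ?thesis using True assms(2) by (simp add: conjugate_def del: upt_Suc)
    qed
    finally show ?thesis using col by simp
  next
    case False
    have "\<forall>x\<in>set mu. x < i"
    proof
      fix x assume "x \<in> set mu"
      then obtain m where "m < length mu" "x = mu ! m" by (auto simp: in_set_conv_nth)
      thus "x < i" using False sorted_desc_nth_le[of mu 0 m] assms(1)
        by (auto simp: part_def is_partition_def)
    qed
    thus ?thesis using False by (simp add: part_def conjugate_def parts_ge_none)
  qed
qed

lemma part_shifted_head:
  assumes "sorted_wrt (\<ge>) xs"
  shows "part (filter (\<lambda>x. 0 < x) (map (\<lambda>x. x - j) xs)) 1 = part xs 1 - j"
proof (cases xs)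
  case (Cons x ys)
  show ?thesis
  proof (cases "j < x")
    case False
    hence "\<forall>y\<in>set ys. y - j = 0" using assms Cons by auto
    hence "filter (\<lambda>x. 0 < x) (map (\<lambda>x. x - j) ys) = []" by (simp add: filter_empty_conv)
    thus ?thesis using Cons False by (simp add: part_def)
  qed (simp add: Cons part_def)
qed (simp add: part_def)

lemma part_dalpha:
  assumes "is_partition p" "1 \<le> i"
  shows "part (dalpha p) i = parts_ge (take (durfee p) p) (durfee p + i)"
proof -
  define j where "j = durfee p"
  define \<nu> where "\<nu> = filter (\<lambda>x. 0 < x) (map (\<lambda>x. x - j) (take j p))"
  have "sorted_wrt (\<ge>) (map (\<lambda>x. x - j) (take j p))"
    using assms(1) by (auto simp: is_partition_def sorted_wrt_map sorted_wrt_take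
        intro: sorted_wrt_mono_rel[of _ "(\<ge>)"])
  hence "is_partition \<nu>" by (simp add: is_partition_def \<nu>_def sorted_wrt_filter)
  hence "part (dalpha p) i = parts_ge \<nu> i"
    using part_conjugate assms(2) by (simp add: dalpha_def \<nu>_def j_def)
  also have "\<dots> = parts_ge (take j p) (j + i)"
  proof -
    have "filter (\<lambda>x. 0 < x - j \<and> i \<le> x - j) (take j p) = filter (\<lambda>x. j + i \<le> x) (take j p)"
      using assms(2) by (intro filter_cong) auto
    thus ?thesis by (simp add: parts_ge_def \<nu>_def filter_map filter_filter comp_def)
  qed
  finally show ?thesis by (simp add: j_def)
qed

lemma length_dalpha:
  assumes "is_partition p" "1 \<le> durfee p"
  shows "length (dalpha p) = part p 1 - durfee p"
proof -
  have "length (dalpha p) = part (filter (\<lambda>x. 0 < x) (map (\<lambda>x. x - durfee p) (take (durfee p) p))) 1"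
    by (simp add: dalpha_def conjugate_def)
  also have "\<dots> = part (take (durfee p) p) 1 - durfee p"
    using assms(1) by (intro part_shifted_head) (simp add: is_partition_def sorted_wrt_take)
  also have "part (take (durfee p) p) 1 = part p 1"
    using assms(2) by (simp add: part_def)
  finally show ?thesis .
qed

lemma part_dbeta: "part (dbeta p) 1 = (if durfee p < length p then p ! durfee p else 0)"
  by (cases "durfee p < length p") (auto simp: dbeta_def part_def)

lemma smallest_ge_iff: "xs \<noteq> [] \<Longrightarrow> enat k \<le> smallest xs \<longleftrightarrow> (\<forall>x\<in>set xs. k \<le> x)"
  by (simp add: smallest_def)

lemma sum_split4:
  fixes a b c d e :: nat
  assumes "a \<le> b" "b \<le> c" "c \<le> d" "d \<le> e"
  shows "sum f {a..<e} = sum f {a..<b} + sum f {b..<c} + sum f {c..<d} + sum f {d..<e}"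
  using assms by (simp add: sum.atLeastLessThan_concat)

locale Q1_shape =
  fixes p :: "nat list" and j :: nat
  assumes sorted: "sorted_wrt (\<ge>) p"
    and parts_at_least_three: "\<forall>x\<in>set p. 3 \<le> x"
    and j_less_length: "j < length p"
    and row_below_square: "p ! j = j"
    and last_square_row: "p ! (j - 1) = j + 2"
    and first_row_short: "p ! 0 < length p"

lemma Q1bar_imp_shape:
  assumes "p \<in> Q1bar n"
  shows "is_partition p \<and> sum_list p = n \<and> Q1_shape p (durfee p)"
proof -
  define j where "j = durfee p"
  have pp: "is_partition p" and sum: "sum_list p = n"
    using assms by (auto simp: Q1bar_def partitions_of_def)
  have srt: "sorted_wrt (\<ge>) p" using pp by (simp add: is_partition_def)
  have j1: "1 \<le> j" and beta1: "part (dbeta p) 1 = j"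
    and len: "int (length (dbeta p)) - int (length (dalpha p)) \<ge> 1"
    and alpha2: "part (dalpha p) 2 = j" and alpha3: "part (dalpha p) 3 < j"
    and beta3: "3 \<le> smallest (dbeta p)"
    using assms by (auto simp: Q1bar_def Let_def j_def)
  have jl: "j < length p" and pj: "p ! j = j"
    using beta1 j1 part_dbeta[of p] by (auto simp: j_def split: if_splits)
  have srt_take: "sorted_wrt (\<ge>) (take j p)" using srt by (simp add: sorted_wrt_take)
  have nth_take: "take j p ! (j - 1) = p ! (j - 1)" and len_take: "length (take j p) = j"
    using j1 jl by auto
  have "parts_ge (take j p) (j + 2) = j" using alpha2 part_dalpha[OF pp, of 2] by (simp add: j_def)
  hence ge: "j + 2 \<le> p ! (j - 1)"
    using parts_ge_upper[OF srt_take, of "j - 1" "j + 2"] nth_take len_take j1 by fastforce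
  have "parts_ge (take j p) (j + 3) < j" using alpha3 part_dalpha[OF pp, of 3] by (simp add: j_def)
  hence le: "p ! (j - 1) < j + 3"
    using parts_ge_lower[OF srt_take, of "j - 1" "j + 3"] nth_take len_take j1 by fastforce
  have p0: "p ! (j - 1) \<le> p ! 0" using sorted_desc_nth_le[OF srt, of 0 "j - 1"] jl by simp
  have "length (dalpha p) = p ! 0 - j"
    using length_dalpha[OF pp] j1 jl by (simp add: j_def part_def)
  hence short: "p ! 0 < length p" using len ge p0 by (simp add: dbeta_def j_def)
  have "dbeta p \<noteq> []" using jl by (simp add: dbeta_def j_def)
  hence "3 \<le> last (dbeta p)"
    using beta3 smallest_ge_iff[of "dbeta p" 3] by (simp add: numeral_eq_enat)
  hence "3 \<le> last p" using jl by (simp add: dbeta_def j_def last_drop)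
  hence "\<forall>x\<in>set p. 3 \<le> x" using last_le_parts[OF srt] order_trans by blast
  hence "Q1_shape p j" using srt jl pj ge le short by unfold_locales simp_all
  thus ?thesis using pp sum by (simp add: j_def)
qed

definition phi_part :: "nat list \<Rightarrow> nat \<Rightarrow> nat \<Rightarrow> nat" where
  "phi_part p j q = (if q = 1 then length p else if q \<le> j - 2 then parts_ge p (q + 2)
     else if q \<le> j + 2 then j + 1 else parts_ge p q + 2)"

definition phi :: "nat list \<Rightarrow> nat \<Rightarrow> nat list" where
  "phi p j = map (phi_part p j) [1..<length p + 1]"

(* Reading the k-th column of p back from the image mu = phi p j,
   given j and L = l(p). *)
definition phi_col :: "nat list \<Rightarrow> nat \<Rightarrow> nat \<Rightarrow> nat \<Rightarrow> nat" where
  "phi_col mu j L k = (if k \<le> 3 then L else if k \<le> j then mu ! (k - 3)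
     else if k \<le> j + 2 then j else if k \<le> L then mu ! (k - 1) - 2 else 0)"

context Q1_shape
begin

lemma j_ge_three: "3 \<le> j"
  using parts_at_least_three j_less_length row_below_square nth_mem by fastforce

lemma partition: "is_partition p"
  using sorted parts_at_least_three by (auto simp: is_partition_def)

lemma length_ge: "j + 3 \<le> length p"
proof -
  have "p ! (j - 1) \<le> p ! 0" using sorted_desc_nth_le[OF sorted, of 0 "j - 1"] j_less_length by simp
  thus ?thesis using last_square_row first_row_short by simp
qed

lemma parts_bounded: "\<forall>x\<in>set p. x < length p"
  using sorted_desc_nth_le[OF sorted, of 0] first_row_short
  by (fastforce simp: in_set_conv_nth)

lemma cols_left: "k \<le> j \<Longrightarrow> j + 1 \<le> parts_ge p k"
  using parts_ge_lower[OF sorted j_less_length] row_below_square by simp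

lemma cols_right: "j + 3 \<le> k \<Longrightarrow> parts_ge p k \<le> j - 1"
  using parts_ge_upper[OF sorted, of "j - 1" k] j_less_length last_square_row by simp

lemma cols_first: "k \<le> 3 \<Longrightarrow> parts_ge p k = length p"
  using parts_at_least_three by (intro parts_ge_all) auto

lemma cols_middle: "k = j + 1 \<or> k = j + 2 \<Longrightarrow> parts_ge p k = j"
  using parts_ge_lower[OF sorted, of "j - 1" k] parts_ge_upper[OF sorted j_less_length, of k]
    j_less_length last_square_row row_below_square j_ge_three
  by fastforce

lemma cols_beyond: "length p \<le> k \<Longrightarrow> parts_ge p k = 0"
  using parts_bounded by (intro parts_ge_none) auto

lemma cols_left_shifted: "q \<le> j - 2 \<Longrightarrow> j + 1 \<le> parts_ge p (q + 2)"
  using cols_left[of "q + 2"] j_ge_three by simp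

lemma phi_part_middle: "j - 1 \<le> q \<Longrightarrow> q \<le> j + 2 \<Longrightarrow> phi_part p j q = j + 1"
  using j_ge_three unfolding phi_part_def by auto

lemma phi_part_antimono: "1 \<le> q \<Longrightarrow> q \<le> r \<Longrightarrow> phi_part p j r \<le> phi_part p j q"
  using parts_ge_antimono[of q r p] parts_ge_antimono[of "q + 2" "r + 2" p]
    parts_ge_le_length[of p] cols_left_shifted[of q] cols_right[of r] j_ge_three length_ge
  unfolding phi_part_def by auto

lemma phi_part_ge_two: "1 \<le> q \<Longrightarrow> 2 \<le> phi_part p j q"
  using cols_left_shifted[of q] j_ge_three length_ge unfolding phi_part_def by auto

lemma length_phi: "length (phi p j) = length p"
  by (simp add: phi_def del: upt_Suc)

lemma nth_phi: "i < length p \<Longrightarrow> phi p j ! i = phi_part p j (i + 1)"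
  by (simp add: phi_def del: upt_Suc)

lemma part_phi: "1 \<le> q \<Longrightarrow> q \<le> length p \<Longrightarrow> part (phi p j) q = phi_part p j q"
  by (simp add: part_def length_phi nth_phi)

lemma phi_parts_ge_two: "\<forall>x\<in>set (phi p j). 2 \<le> x"
proof
  fix x assume "x \<in> set (phi p j)"
  then obtain i where "i < length p" "x = phi_part p j (i + 1)"
    by (auto simp: in_set_conv_nth length_phi nth_phi)
  thus "2 \<le> x" using phi_part_ge_two[of "i + 1"] by simp
qed

lemma phi_sorted: "sorted_wrt (\<ge>) (phi p j)"
  unfolding sorted_wrt_iff_nth_less length_phi by (auto simp: nth_phi intro: phi_part_antimono)

lemma phi_partition: "is_partition (phi p j)"
  using phi_sorted phi_parts_ge_two by (auto simp: is_partition_def)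

(* Column decomposition of |p|, using c_1 = c_2 = c_3 = L and
   c_{j+1} = c_{j+2} = j. *)
lemma sum_list_by_cols:
  "sum_list p = 3 * length p + (\<Sum>k\<in>{4..<j+1}. parts_ge p k) + 2 * j
     + (\<Sum>k\<in>{j+3..<length p+1}. parts_ge p k)"
proof -
  let ?c = "parts_ge p" and ?L = "length p"
  have "sum_list p = (\<Sum>k\<in>{1..<?L+1}. ?c k)"
    using sum_list_parts_ge[of p ?L] parts_bounded
    by (simp add: less_imp_le atLeastLessThanSuc_atLeastAtMost)
  also have "\<dots> = (\<Sum>k\<in>{1..<4}. ?c k) + (\<Sum>k\<in>{4..<j+1}. ?c k)
      + (\<Sum>k\<in>{j+1..<j+3}. ?c k) + (\<Sum>k\<in>{j+3..<?L+1}. ?c k)"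
    using j_ge_three length_ge by (intro sum_split4) auto
  also have "(\<Sum>k\<in>{1..<4}. ?c k) = 3 * ?L"
    using cols_first by (simp add: numeral_eq_Suc)
  also have "(\<Sum>k\<in>{j+1..<j+3}. ?c k) = 2 * j"
    using cols_middle by (simp add: numeral_3_eq_3)
  finally show ?thesis .
qed

lemma sum_list_phi_by_cols:
  "sum_list (phi p j) = length p + (\<Sum>k\<in>{4..<j+1}. parts_ge p k) + 4 * (j + 1)
     + (\<Sum>k\<in>{j+3..<length p+1}. parts_ge p k) + 2 * (length p - j - 2)"
proof -
  let ?g = "phi_part p j" and ?L = "length p"
  have "sum_list (phi p j) = (\<Sum>q\<in>{1..<?L+1}. ?g q)"
    unfolding phi_def by (simp add: sum_set_upt_conv_sum_list_nat[symmetric] del: upt_Suc)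
  also have "\<dots> = (\<Sum>q\<in>{1..<2}. ?g q) + (\<Sum>q\<in>{2..<j-1}. ?g q)
      + (\<Sum>q\<in>{j-1..<j+3}. ?g q) + (\<Sum>q\<in>{j+3..<?L+1}. ?g q)"
    using j_ge_three length_ge by (intro sum_split4) auto
  also have "(\<Sum>q\<in>{1..<2}. ?g q) = ?L" by (simp add: phi_part_def)
  also have "(\<Sum>q\<in>{2..<j-1}. ?g q) = (\<Sum>q\<in>{2..<j-1}. parts_ge p (q + 2))"
    by (rule sum.cong) (auto simp: phi_part_def)
  also have "\<dots> = (\<Sum>k\<in>{4..<j+1}. parts_ge p k)"
    using sum.shift_bounds_nat_ivl[of "parts_ge p" 2 2 "j - 1"] j_ge_three by (simp add: add.commute)
  also have "(\<Sum>q\<in>{j-1..<j+3}. ?g q) = (\<Sum>q\<in>{j-1..<j+3}. j + 1)"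
    using j_ge_three by (intro sum.cong) (auto simp: phi_part_def)
  also have "\<dots> = 4 * (j + 1)" using j_ge_three by simp
  also have "(\<Sum>q\<in>{j+3..<?L+1}. ?g q) = (\<Sum>q\<in>{j+3..<?L+1}. parts_ge p q + 2)"
    by (rule sum.cong) (auto simp: phi_part_def)
  also have "\<dots> = (\<Sum>k\<in>{j+3..<?L+1}. parts_ge p k) + (\<Sum>k\<in>{j+3..<?L+1}. 2)"
    by (simp only: sum.distrib)
  also have "(\<Sum>k\<in>{j+3..<?L+1}. (2::nat)) = 2 * (?L - j - 2)"
    using length_ge by simp
  finally show ?thesis by simp
qed

(* The map preserves the size: both sums exceed the common part by 3L + 2j. *)
lemma sum_list_phi: "sum_list (phi p j) = sum_list p"
  using sum_list_by_cols sum_list_phi_by_cols length_ge by simp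

lemma durfee_phi: "durfee (phi p j) = j + 1"
  unfolding durfee_def
proof (rule Greatest_equality)
  show "j + 1 \<le> length (phi p j) \<and> (j + 1 = 0 \<or> j + 1 \<le> part (phi p j) (j + 1))"
    using length_ge j_ge_three by (auto simp: length_phi part_phi phi_part_def)
next
  fix y assume y: "y \<le> length (phi p j) \<and> (y = 0 \<or> y \<le> part (phi p j) y)"
  show "y \<le> j + 1"
  proof (rule ccontr)
    assume "\<not> y \<le> j + 1"
    hence "j + 2 \<le> y" by simp
    hence "y \<le> phi_part p j (j + 2)"
      using y phi_part_antimono[of "j + 2" y] by (auto simp: length_phi part_phi)
    moreover have "phi_part p j (j + 2) = j + 1" by (simp add: phi_part_middle)
    ultimately show False using \<open>j + 2 \<le> y\<close> by simp
  qed
qed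

(* The image lies in P1bar: rank 0, gamma and delta of length L - j - 1,
   gamma_1 <= j - 2 because rows j-1 .. j+1 equal j + 1, delta_1 = j + 1
   and all parts are at least 2. *)
lemma phi_in_P1bar: "phi p j \<in> P1bar (sum_list p)"
proof -
  let ?mu = "phi p j" and ?L = "length p"
  have pmu: "is_partition ?mu" by (rule phi_partition)
  have d: "durfee ?mu = j + 1" by (rule durfee_phi)
  have "part ?mu 1 = phi_part p j 1" using length_ge by (intro part_phi) auto
  hence first: "part ?mu 1 = ?L" by (simp add: phi_part_def)
  have rank: "rank ?mu = 0" using first by (simp add: rank_def length_phi)
  have len_gamma: "length (dalpha ?mu) = ?L - (j + 1)"
    using length_dalpha[OF pmu] d first by simp
  have len_delta: "length (dbeta ?mu) = ?L - (j + 1)"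
    by (simp add: dbeta_def d length_phi)
  have gamma1: "part (dalpha ?mu) 1 \<le> j - 2"
  proof -
    have "take (j + 1) ?mu ! (j - 2) = phi_part p j (j - 1)"
    proof -
      have "Suc (j - 2) = j - 1" using j_ge_three by simp
      thus ?thesis using length_ge by (simp add: nth_phi)
    qed
    also have "\<dots> = j + 1" by (simp add: phi_part_middle)
    finally have "take (j + 1) ?mu ! (j - 2) < j + 2" by simp
    moreover have "sorted_wrt (\<ge>) (take (j + 1) ?mu)" using phi_sorted by (simp add: sorted_wrt_take)
    ultimately have "parts_ge (take (j + 1) ?mu) (j + 2) \<le> j - 2"
      using parts_ge_upper[of "take (j + 1) ?mu" "j - 2"] length_ge by (simp add: length_phi)
    thus ?thesis using part_dalpha[OF pmu, of 1] d by simp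
  qed
  have delta1: "part (dbeta ?mu) 1 = j + 1"
    using part_dbeta[of ?mu] d length_ge by (simp add: length_phi nth_phi phi_part_middle)
  have delta_min: "2 \<le> smallest (dbeta ?mu)"
  proof -
    have "set (dbeta ?mu) \<subseteq> set ?mu" by (simp add: dbeta_def set_drop_subset)
    hence "\<forall>x\<in>set (dbeta ?mu). 2 \<le> x" using phi_parts_ge_two by blast
    moreover have "dbeta ?mu \<noteq> []" using len_delta length_ge by auto
    ultimately show ?thesis using smallest_ge_iff[of "dbeta ?mu" 2] by (simp add: numeral_eq_enat)
  qed
  have "?mu \<in> partitions_of (sum_list p)"
    using pmu sum_list_phi by (simp add: partitions_of_def)
  thus ?thesis unfolding P1bar_def Let_def
    using rank d len_gamma len_delta gamma1 delta1 delta_min j_ge_three by auto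
qed

lemma cols_recovered: "parts_ge p k = phi_col (phi p j) j (length p) k"
proof -
  consider "k \<le> 3" | "3 < k" "k \<le> j" | "j < k" "k \<le> j + 2" | "j + 2 < k" "k \<le> length p"
    | "length p < k"
    by linarith
  thus ?thesis
  proof cases
    case 1 thus ?thesis by (simp add: phi_col_def cols_first)
  next
    case 2
    hence "phi p j ! (k - 3) = phi_part p j (k - 2)"
      using length_ge by (simp add: nth_phi Suc_diff_Suc numeral_eq_Suc)
    also have "\<dots> = parts_ge p k"
    proof -
      have "k - 2 \<noteq> 1" "k - 2 \<le> j - 2" "k - 2 + 2 = k" using 2 by auto
      thus ?thesis unfolding phi_part_def by presburger
    qed
    finally show ?thesis using 2 by (simp add: phi_col_def)
  next
    case 3
    hence "k = j + 1 \<or> k = j + 2" by auto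
    thus ?thesis using 3 cols_middle j_ge_three by (auto simp: phi_col_def)
  next
    case 4 thus ?thesis using j_ge_three by (auto simp: phi_col_def nth_phi phi_part_def)
  next
    case 5 thus ?thesis using cols_beyond length_ge by (simp add: phi_col_def)
  qed
qed

end

(* Partitions of this shape are determined by their images: the image
   determines j (its Durfee side minus one), l(p), and then every column. *)
lemma phi_injective:
  assumes p: "Q1_shape p j" and q: "Q1_shape q k" and eq: "phi p j = phi q k"
  shows "p = q"
proof -
  have "j = k" using Q1_shape.durfee_phi[OF p] Q1_shape.durfee_phi[OF q] eq by simp
  moreover have "length p = length q"
    using Q1_shape.length_phi[OF p] Q1_shape.length_phi[OF q] eq by metis
  ultimately have "parts_ge p i = parts_ge q i" for i
    using Q1_shape.cols_recovered[OF p, of i] Q1_shape.cols_recovered[OF q, of i] eq by simp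
  thus ?thesis
    using partition_eq_by_parts_ge Q1_shape.partition[OF p] Q1_shape.partition[OF q] by blast
qed

theorem lemma5p1:
  fixes n :: nat
  assumes "n \<ge> 1"
  shows "\<exists>f. inj_on f (Q1bar n) \<and> f ` Q1bar n \<subseteq> P1bar n"
proof (intro exI conjI)
  let ?f = "\<lambda>p. phi p (durfee p)"
  show "inj_on ?f (Q1bar n)"
    by (rule inj_onI) (meson Q1bar_imp_shape phi_injective)
  show "?f ` Q1bar n \<subseteq> P1bar n"
  proof
    fix y assume "y \<in> ?f ` Q1bar n"
    then obtain p where p: "p \<in> Q1bar n" "y = ?f p" by blast
    thus "y \<in> P1bar n" using Q1bar_imp_shape[OF p(1)] Q1_shape.phi_in_P1bar by fastforce
  qed
qed

end
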